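(* Let $\mathcal F^{2R}$ be a 2-D Riemannian foliation of $\mathcal M$ satisfying $d(H^\flat)=-d(\tilde H^\flat)$. Let $(e_0,e_1,e_2,e_3)$ be a Riemannian foliation adapted frame on a starlike open set $U_p$ about $p\in\mathcal M$, and let $F_E=\tilde u\,e_0^\flat\wedge e_1^\flat$ be the associated electrically dominated force-free field on $U_p$ (with $d\ln|\tilde u|=2(H+\tilde H)^\flat$). Suppose the distribution spanned by $e_0$ and $e_1$ is involutive. Then $F_M:=\tilde u\,e_2^\flat\wedge e_3^\flat$ is a magnetically dominated force-free field on $U_p$ (with kernel spanned by $e_0,e_1$). Moreover both $F_E$ and $F_M$ are vacuum solutions, and $\star F_E=-F_M$, where $\star$ is the Hodge star for the orientation of $(e_0,e_1,e_2,e_3)$ in which $\star(e_0^\flat\wedge e_1^\flat)=-e_2^\flat\wedge e_3^\flat$.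
   Context: $(\mathcal M,g)$ is a 4-dimensional spacetime with metric of signature $(-,+,+,+)$ and Levi-Civita connection $\nabla$; $X^\flat$ is the metric dual 1-form of $X$. An electromagnetic field is a 2-form $F$ with $dF=0$; current density vector $j^\nu=-\nabla_\mu F^{\mu\nu}$; force-free means $F(j,\chi)=0$ for all $\chi$; magnetically (electrically) dominated means $F_{\mu\nu}F^{\mu\nu}>0$ ($<0$); vacuum means $j=0$. A 2-D Riemannian foliation is a foliation by 2-dimensional submanifolds with positive definite induced metric; a Riemannian foliation adapted frame is an orthonormal frame ($g(e_\mu,e_\nu)=\mathrm{diag}(-1,1,1,1)_{\mu\nu}$) with $e_2,e_3$ spanning the leaves' tangent spaces. $H,\tilde H$ are defined by $2H=[-g(\nabla_{e_0}e_0,e_2)+g(\nabla_{e_1}e_1,e_2)]e_2+[-g(\nabla_{e_0}e_0,e_3)+g(\nabla_{e_1}e_1,e_3)]e_3$, $2\tilde H=[-g(\nabla_{e_2}e_2,e_0)-g(\nabla_{e_3}e_3,e_0)]e_0+[g(\nabla_{e_2}e_2,e_1)+g(\nabla_{e_3}e_3,e_1)]e_1$. A starlike open set is star-shaped in some chart; a distribution is involutive if closed under Lie bracket. *)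

theory Defs
  imports "HOL-Analysis.Analysis"
begin

text \<open>Local coordinate model: the starlike open set U_p is taken inside a chart, i.e. a subset
of R^4 (coordinates indexed by the type 4). Tensor fields are given by their components in the
coordinate basis: vector fields and 1-forms are functions real^4 => real^4, 2-forms and the metric
are functions real^4 => real^4^4.\<close>

type_synonym vfield = "real^4 \<Rightarrow> real^4"
type_synonym tfield = "real^4 \<Rightarrow> real^4^4"

definition pd :: "4 \<Rightarrow> (real^4 \<Rightarrow> real) \<Rightarrow> real^4 \<Rightarrow> real" where
  "pd i f x = frechet_derivative f (at x) (axis i 1)"

fun pdl :: "4 list \<Rightarrow> (real^4 \<Rightarrow> real) \<Rightarrow> real^4 \<Rightarrow> real" where
  "pdl [] f = f"
| "pdl (i # is) f = pd i (pdl is f)"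

definition smooth4_on :: "(real^4) set \<Rightarrow> (real^4 \<Rightarrow> real) \<Rightarrow> bool" where
  "smooth4_on U f \<longleftrightarrow> (\<forall>is. pdl is f differentiable_on U)"

definition smooth_vf_on :: "(real^4) set \<Rightarrow> vfield \<Rightarrow> bool" where
  "smooth_vf_on U X \<longleftrightarrow> (\<forall>k. smooth4_on U (\<lambda>y. X y $ k))"

definition smooth_tf_on :: "(real^4) set \<Rightarrow> tfield \<Rightarrow> bool" where
  "smooth_tf_on U F \<longleftrightarrow> (\<forall>i j. smooth4_on U (\<lambda>y. F y $ i $ j))"

text \<open>Smooth symmetric metric on U (signature is enforced by the orthonormal frame below).\<close>
definition metric_on :: "(real^4) set \<Rightarrow> tfield \<Rightarrow> bool" where
  "metric_on U G \<longleftrightarrow> smooth_tf_on U G \<and> (\<forall>x\<in>U. \<forall>i j. G x $ i $ j = G x $ j $ i)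
      \<and> (\<forall>x\<in>U. det (G x) \<noteq> 0)"

definition gm :: "tfield \<Rightarrow> real^4 \<Rightarrow> real^4 \<Rightarrow> real^4 \<Rightarrow> real" where
  "gm G x X Y = (\<Sum>i\<in>UNIV. \<Sum>j\<in>UNIV. G x $ i $ j * X $ i * Y $ j)"

definition ginv :: "tfield \<Rightarrow> real^4 \<Rightarrow> real^4^4" where
  "ginv G x = matrix_inv (G x)"

definition christoffel :: "tfield \<Rightarrow> real^4 \<Rightarrow> 4 \<Rightarrow> 4 \<Rightarrow> 4 \<Rightarrow> real" where
  "christoffel G x k i j = (\<Sum>l\<in>UNIV. ginv G x $ k $ l *
      (pd i (\<lambda>y. G y $ j $ l) x + pd j (\<lambda>y. G y $ i $ l) x - pd l (\<lambda>y. G y $ i $ j) x)) / 2"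

definition cov :: "tfield \<Rightarrow> vfield \<Rightarrow> vfield \<Rightarrow> vfield" where
  "cov G X Y x = (\<chi> k. (\<Sum>i\<in>UNIV. X x $ i * pd i (\<lambda>y. Y y $ k) x)
      + (\<Sum>i\<in>UNIV. \<Sum>j\<in>UNIV. christoffel G x k i j * X x $ i * Y x $ j))"

definition flat :: "tfield \<Rightarrow> vfield \<Rightarrow> vfield" where
  "flat G X x = (\<chi> i. \<Sum>j\<in>UNIV. G x $ i $ j * X x $ j)"

definition lie :: "vfield \<Rightarrow> vfield \<Rightarrow> vfield" where
  "lie X Y x = (\<chi> k. \<Sum>i\<in>UNIV. X x $ i * pd i (\<lambda>y. Y y $ k) x - Y x $ i * pd i (\<lambda>y. X y $ k) x)"

definition wedge :: "vfield \<Rightarrow> vfield \<Rightarrow> tfield" where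
  "wedge a b x = (\<chi> i j. a x $ i * b x $ j - a x $ j * b x $ i)"

definition d1 :: "vfield \<Rightarrow> tfield" where
  "d1 a x = (\<chi> i j. pd i (\<lambda>y. a y $ j) x - pd j (\<lambda>y. a y $ i) x)"

definition closed2_on :: "(real^4) set \<Rightarrow> tfield \<Rightarrow> bool" where
  "closed2_on U F \<longleftrightarrow> (\<forall>x\<in>U. \<forall>i j k. pd i (\<lambda>y. F y $ j $ k) x + pd j (\<lambda>y. F y $ k $ i) x
      + pd k (\<lambda>y. F y $ i $ j) x = 0)"

definition em_field_on :: "(real^4) set \<Rightarrow> tfield \<Rightarrow> bool" where
  "em_field_on U F \<longleftrightarrow> smooth_tf_on U F \<and> (\<forall>x\<in>U. \<forall>i j. F x $ i $ j = - F x $ j $ i)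
      \<and> closed2_on U F"

definition raise2 :: "tfield \<Rightarrow> tfield \<Rightarrow> tfield" where
  "raise2 G F x = (\<chi> m n. \<Sum>a\<in>UNIV. \<Sum>b\<in>UNIV. ginv G x $ m $ a * ginv G x $ n $ b * F x $ a $ b)"

definition current :: "tfield \<Rightarrow> tfield \<Rightarrow> vfield" where
  "current G F x = (\<chi> n. - ((\<Sum>m\<in>UNIV. pd m (\<lambda>y. raise2 G F y $ m $ n) x)
      + (\<Sum>m\<in>UNIV. \<Sum>l\<in>UNIV. christoffel G x m m l * raise2 G F x $ l $ n)
      + (\<Sum>m\<in>UNIV. \<Sum>l\<in>UNIV. christoffel G x n m l * raise2 G F x $ m $ l)))"

definition form2 :: "tfield \<Rightarrow> real^4 \<Rightarrow> real^4 \<Rightarrow> real^4 \<Rightarrow> real" where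
  "form2 F x X Y = (\<Sum>i\<in>UNIV. \<Sum>j\<in>UNIV. F x $ i $ j * X $ i * Y $ j)"

definition force_free_on :: "tfield \<Rightarrow> (real^4) set \<Rightarrow> tfield \<Rightarrow> bool" where
  "force_free_on G U F \<longleftrightarrow> (\<forall>x\<in>U. \<forall>Z. form2 F x (current G F x) Z = 0)"

definition inv_sq :: "tfield \<Rightarrow> tfield \<Rightarrow> real^4 \<Rightarrow> real" where
  "inv_sq G F x = (\<Sum>m\<in>UNIV. \<Sum>n\<in>UNIV. F x $ m $ n * raise2 G F x $ m $ n)"

definition magnetically_dominated_on :: "tfield \<Rightarrow> (real^4) set \<Rightarrow> tfield \<Rightarrow> bool" where
  "magnetically_dominated_on G U F \<longleftrightarrow> (\<forall>x\<in>U. inv_sq G F x > 0)"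

definition electrically_dominated_on :: "tfield \<Rightarrow> (real^4) set \<Rightarrow> tfield \<Rightarrow> bool" where
  "electrically_dominated_on G U F \<longleftrightarrow> (\<forall>x\<in>U. inv_sq G F x < 0)"

definition vacuum_on :: "tfield \<Rightarrow> (real^4) set \<Rightarrow> tfield \<Rightarrow> bool" where
  "vacuum_on G U F \<longleftrightarrow> (\<forall>x\<in>U. current G F x = 0)"

definition orthonormal_frame_on :: "tfield \<Rightarrow> (real^4) set \<Rightarrow> (nat \<Rightarrow> vfield) \<Rightarrow> bool" where
  "orthonormal_frame_on G U e \<longleftrightarrow> (\<forall>\<mu><4. smooth_vf_on U (e \<mu>))
     \<and> (\<forall>x\<in>U. \<forall>\<mu><4. \<forall>\<nu><4. gm G x (e \<mu> x) (e \<nu> x)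
            = (if \<mu> = \<nu> then (if \<mu> = 0 then -1 else 1) else 0))"

definition involutive2_on :: "(real^4) set \<Rightarrow> vfield \<Rightarrow> vfield \<Rightarrow> bool" where
  "involutive2_on U X Y \<longleftrightarrow> (\<forall>x\<in>U. lie X Y x \<in> span {X x, Y x})"

text \<open>Frame adapted to a 2-D Riemannian foliation on U: orthonormal frame whose spacelike
vectors e_2, e_3 span an integrable (involutive, by Frobenius = tangent to the leaves of a
foliation) distribution.\<close>
definition riem_fol_adapted_frame_on :: "tfield \<Rightarrow> (real^4) set \<Rightarrow> (nat \<Rightarrow> vfield) \<Rightarrow> bool" where
  "riem_fol_adapted_frame_on G U e \<longleftrightarrow> orthonormal_frame_on G U e \<and> involutive2_on U (e 2) (e 3)"

definition Hvec :: "tfield \<Rightarrow> (nat \<Rightarrow> vfield) \<Rightarrow> vfield" where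
  "Hvec G e x = (1/2) *\<^sub>R
     ((- gm G x (cov G (e 0) (e 0) x) (e 2 x) + gm G x (cov G (e 1) (e 1) x) (e 2 x)) *\<^sub>R e 2 x
    + (- gm G x (cov G (e 0) (e 0) x) (e 3 x) + gm G x (cov G (e 1) (e 1) x) (e 3 x)) *\<^sub>R e 3 x)"

definition Htvec :: "tfield \<Rightarrow> (nat \<Rightarrow> vfield) \<Rightarrow> vfield" where
  "Htvec G e x = (1/2) *\<^sub>R
     ((- gm G x (cov G (e 2) (e 2) x) (e 0 x) - gm G x (cov G (e 3) (e 3) x) (e 0 x)) *\<^sub>R e 0 x
    + (gm G x (cov G (e 2) (e 2) x) (e 1 x) + gm G x (cov G (e 3) (e 3) x) (e 1 x)) *\<^sub>R e 1 x)"

text \<open>Levi-Civita symbol (coordinate orientation) and Hodge star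
(star F)_{mn} = 1/2 s sqrt|det g| eps_{mnrt} F^{rt}, with orientation sign s.\<close>
definition levi :: "4 \<Rightarrow> 4 \<Rightarrow> 4 \<Rightarrow> 4 \<Rightarrow> real" where
  "levi a b c d = det (vector [axis a 1, axis b 1, axis c 1, axis d 1] :: real^4^4)"

definition hodge :: "tfield \<Rightarrow> real \<Rightarrow> tfield \<Rightarrow> tfield" where
  "hodge G s F x = (\<chi> m n. (\<Sum>r\<in>UNIV. \<Sum>t\<in>UNIV.
      s * sqrt \<bar>det (G x)\<bar> * levi m n r t * raise2 G F x $ r $ t) / 2)"

end

theory Submission
  imports Defs
begin

text \<open>
  In an orthonormal frame, the 2-form \<open>u a\<^sup>\<flat> \<and> b\<^sup>\<flat>\<close> raises to \<open>u (A \<otimes> B - B \<otimes> A)\<close>, so its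
  current is \<open>-((A u + u div A) B - (B u + u div B) A + u [A, B])\<close>. Write the divergences, the
  brackets and, via \<open>d ln |u| = 2 (H + H\<^sup>~)\<^sup>\<flat>\<close>, the derivatives of \<open>u\<close> in terms of the
  connection coefficients \<open>g(\<nabla>\<^bsub>e_a\<^esub> e_b, e_c)\<close>: the two coefficients of the current then cancel
  identically as soon as \<open>[e_0, e_1]\<close> stays in \<open>span {e_0, e_1}\<close> (for \<open>F_E\<close>), resp. \<open>[e_2, e_3]\<close>
  in \<open>span {e_2, e_3}\<close> (for \<open>F_M\<close>). So both fields are vacuum, hence force-free, and the same
  cancellation, evaluated on frame triples, gives \<open>d F_M = 0\<close>. The invariant \<open>F\<^sub>\<mu>\<^sub>\<nu> F\<^sup>\<mu>\<^sup>\<nu>\<close> is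
  \<open>-2u\<^sup>2\<close> for \<open>F_E\<close> and \<open>2u\<^sup>2\<close> for \<open>F_M\<close>; hence \<open>u\<close> never vanishes and \<open>F_M\<close> is magnetically
  dominated. Its kernel is the orthogonal complement of \<open>e_2, e_3\<close>, and since the Hodge star is
  linear over functions, \<open>\<star>F_E = u \<star>(e_0\<^sup>\<flat> \<and> e_1\<^sup>\<flat>) = -F_M\<close>.
\<close>

lemma pd_cong:
  assumes "open U" "x \<in> U" "\<And>y. y \<in> U \<Longrightarrow> f y = g y"
  shows "pd i f x = pd i g x"
proof -
  have "\<And>f'. (f has_derivative f') (at x) \<longleftrightarrow> (g has_derivative f') (at x)"
    using has_derivative_transform_within_open[OF _ assms(1,2)] assms(3) by metis
  then show ?thesis
    unfolding pd_def frechet_derivative_def by simp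
qed

lemma pd_eq_derivative:
  assumes "(f has_derivative f') (at x)"
  shows "pd i f x = f' (axis i 1)"
  using frechet_derivative_at[OF assms] unfolding pd_def by simp

lemma pd_const [simp]: "pd i (\<lambda>y. c) x = 0"
  using pd_eq_derivative[OF has_derivative_const] by simp

lemma pd_add:
  assumes "f differentiable at x" "g differentiable at x"
  shows "pd i (\<lambda>y. f y + g y) x = pd i f x + pd i g x"
  using pd_eq_derivative[OF has_derivative_add[OF assms[unfolded frechet_derivative_works]]]
  unfolding pd_def by simp

lemma pd_diff:
  assumes "f differentiable at x" "g differentiable at x"
  shows "pd i (\<lambda>y. f y - g y) x = pd i f x - pd i g x"
  using pd_eq_derivative[OF has_derivative_diff[OF assms[unfolded frechet_derivative_works]]]
  unfolding pd_def by simp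

lemma pd_mult:
  assumes "f differentiable at x" "g differentiable at x"
  shows "pd i (\<lambda>y. f y * g y) x = pd i f x * g x + f x * pd i g x"
  using pd_eq_derivative[OF has_derivative_mult[OF assms[unfolded frechet_derivative_works]]]
  unfolding pd_def by simp

lemma pd_mult3:
  assumes "f differentiable at x" "g differentiable at x" "h differentiable at x"
  shows "pd i (\<lambda>y. f y * g y * h y) x
    = pd i f x * g x * h x + f x * pd i g x * h x + f x * g x * pd i h x"
proof -
  have "pd i (\<lambda>y. f y * g y * h y) x = pd i (\<lambda>y. f y * g y) x * h x + f x * g x * pd i h x"
    using pd_mult[of "\<lambda>y. f y * g y" x h i] assms by simp
  then show ?thesis
    using pd_mult[OF assms(1,2)] by (simp add: algebra_simps)
qed

lemma pd_scaled_wedge: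
  assumes "u differentiable at x" "\<And>j. (\<lambda>y. a y $ j) differentiable at x"
    "\<And>j. (\<lambda>y. b y $ j) differentiable at x"
  shows "pd i (\<lambda>y. u y * (a y $ j * b y $ k - a y $ k * b y $ j)) x
     = pd i u x * a x $ j * b x $ k - pd i u x * a x $ k * b x $ j
       + u x * (pd i (\<lambda>y. a y $ j) x * b x $ k) + u x * (a x $ j * pd i (\<lambda>y. b y $ k) x)
       - u x * (pd i (\<lambda>y. a y $ k) x * b x $ j) - u x * (a x $ k * pd i (\<lambda>y. b y $ j) x)"
proof -
  have "pd i (\<lambda>y. u y * (a y $ j * b y $ k - a y $ k * b y $ j)) x
     = pd i u x * (a x $ j * b x $ k - a x $ k * b x $ j)
       + u x * pd i (\<lambda>y. a y $ j * b y $ k - a y $ k * b y $ j) x"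
    by (rule pd_mult) (use assms in auto)
  also have "pd i (\<lambda>y. a y $ j * b y $ k - a y $ k * b y $ j) x
     = pd i (\<lambda>y. a y $ j * b y $ k) x - pd i (\<lambda>y. a y $ k * b y $ j) x"
    by (rule pd_diff) (use assms in auto)
  finally show ?thesis
    using assms by (simp add: pd_mult algebra_simps)
qed

lemma pd_sum:
  assumes "\<And>k. k \<in> S \<Longrightarrow> f k differentiable at x"
  shows "pd i (\<lambda>y. \<Sum>k\<in>S. f k y) x = (\<Sum>k\<in>S. pd i (f k) x)"
proof -
  have "((\<lambda>y. \<Sum>k\<in>S. f k y) has_derivative (\<lambda>h. \<Sum>k\<in>S. frechet_derivative (f k) (at x) h)) (at x)"
    using assms by (intro has_derivative_sum) (simp add: frechet_derivative_works)
  from pd_eq_derivative[OF this, of i] show ?thesis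
    by (simp add: pd_def)
qed

text \<open>This holds at \<open>t = 0\<close> too, since \<open>ln 0 = 0\<close>.\<close>

lemma ln_square_eq: "ln (t\<^sup>2) = 2 * ln \<bar>t::real\<bar>"
proof (cases "t = 0")
  case False
  then show ?thesis using ln_realpow[of "\<bar>t\<bar>" 2] by simp
qed simp

lemma pd_ln_abs:
  assumes "f differentiable at x" "f x \<noteq> 0"
  shows "pd i (\<lambda>y. ln \<bar>f y\<bar>) x = pd i f x / f x"
proof -
  have "(f has_derivative frechet_derivative f (at x)) (at x)"
    using assms(1) frechet_derivative_works by blast
  then have "((\<lambda>y. ln ((f y)\<^sup>2) / 2) has_derivative (\<lambda>h. frechet_derivative f (at x) h / f x)) (at x)"
    using assms(2)
    by (auto intro!: derivative_eq_intros simp: field_simps power2_eq_square zero_less_mult_iff)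
  then have "((\<lambda>y. ln \<bar>f y\<bar>) has_derivative (\<lambda>h. frechet_derivative f (at x) h / f x)) (at x)"
    by (simp add: ln_square_eq)
  from pd_eq_derivative[OF this, of i] show ?thesis
    by (simp add: pd_def)
qed

lemma pdl_snoc: "pdl (is @ [i]) f = pdl is (pd i f)"
  by (induction "is") auto

lemma smooth4_on_pd: "smooth4_on U f \<Longrightarrow> smooth4_on U (pd i f)"
  unfolding smooth4_on_def by (metis pdl_snoc)

lemma smooth4_on_imp_differentiable_on: "smooth4_on U f \<Longrightarrow> f differentiable_on U"
  using pdl.simps(1)[of f] unfolding smooth4_on_def by metis

lemma smooth4_on_imp_differentiable:
  assumes "open U" "smooth4_on U f" "x \<in> U"
  shows "f differentiable at x"
  using assms smooth4_on_imp_differentiable_on differentiable_on_eq_differentiable_at by blast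

lemma differentiable_on_cong:
  assumes "\<And>y. y \<in> U \<Longrightarrow> f y = g y" "f differentiable_on U"
  shows "g differentiable_on U"
  unfolding differentiable_on_def differentiable_def
proof
  fix y
  assume "y \<in> U"
  then obtain f' where "(f has_derivative f') (at y within U)"
    using assms(2) unfolding differentiable_on_def differentiable_def by blast
  then show "\<exists>g'. (g has_derivative g') (at y within U)"
    using has_derivative_transform_within[OF _ zero_less_one \<open>y \<in> U\<close>] assms(1) by blast
qed

lemma pdl_cong:
  assumes "open U" "\<And>y. y \<in> U \<Longrightarrow> f y = g y" "y \<in> U"
  shows "pdl is f y = pdl is g y"
  using assms(3)
proof (induction "is" arbitrary: y)
  case (Cons i "is")
  have "pd i (pdl is f) y = pd i (pdl is g) y"
    by (rule pd_cong[OF assms(1) Cons.prems]) (rule Cons.IH)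
  then show ?case by simp
qed (use assms in simp)

definition pd_differentiable_upto :: "nat \<Rightarrow> (real^4) set \<Rightarrow> (real^4 \<Rightarrow> real) \<Rightarrow> bool" where
  "pd_differentiable_upto n U f \<longleftrightarrow> (\<forall>is. length is \<le> n \<longrightarrow> pdl is f differentiable_on U)"

lemma smooth4_on_iff_upto: "smooth4_on U f \<longleftrightarrow> (\<forall>n. pd_differentiable_upto n U f)"
  unfolding smooth4_on_def pd_differentiable_upto_def by auto

lemma pd_differentiable_upto_0: "pd_differentiable_upto 0 U f \<longleftrightarrow> f differentiable_on U"
  unfolding pd_differentiable_upto_def by simp

lemma pd_differentiable_upto_Suc:
  "pd_differentiable_upto (Suc n) U f \<longleftrightarrow>
    f differentiable_on U \<and> (\<forall>i. pd_differentiable_upto n U (pd i f))"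
proof
  assume upto: "pd_differentiable_upto (Suc n) U f"
  have "pdl [] f differentiable_on U"
    using upto unfolding pd_differentiable_upto_def by (auto dest: spec[of _ "[]"])
  moreover have "pdl js (pd i f) differentiable_on U" if "length js \<le> n" for i js
    using upto that unfolding pd_differentiable_upto_def
    by (auto dest: spec[of _ "js @ [i]"] simp: pdl_snoc)
  ultimately show "f differentiable_on U \<and> (\<forall>i. pd_differentiable_upto n U (pd i f))"
    unfolding pd_differentiable_upto_def by simp
next
  assume upto: "f differentiable_on U \<and> (\<forall>i. pd_differentiable_upto n U (pd i f))"
  show "pd_differentiable_upto (Suc n) U f"
    unfolding pd_differentiable_upto_def
  proof (intro allI impI)
    fix "is" :: "4 list"
    assume len: "length is \<le> Suc n"
    show "pdl is f differentiable_on U"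
    proof (cases "is" rule: rev_cases)
      case (snoc js i)
      then have "length js \<le> n" using len by simp
      then show ?thesis
        using upto unfolding snoc pdl_snoc pd_differentiable_upto_def by blast
    qed (use upto in simp)
  qed
qed

lemma pd_differentiable_upto_cong:
  assumes "open U" "\<And>y. y \<in> U \<Longrightarrow> f y = g y" "pd_differentiable_upto n U f"
  shows "pd_differentiable_upto n U g"
  unfolding pd_differentiable_upto_def
proof (intro allI impI)
  fix "is" :: "4 list"
  assume "length is \<le> n"
  then have diff: "pdl is f differentiable_on U"
    using assms(3) unfolding pd_differentiable_upto_def by blast
  have "\<And>y. y \<in> U \<Longrightarrow> pdl is f y = pdl is g y"
    by (rule pdl_cong[OF assms(1,2)])
  then show "pdl is g differentiable_on U"
    using diff by (rule differentiable_on_cong)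
qed

lemma pd_differentiable_upto_add:
  assumes "open U"
  shows "pd_differentiable_upto n U f \<Longrightarrow> pd_differentiable_upto n U g
    \<Longrightarrow> pd_differentiable_upto n U (\<lambda>y. f y + g y)"
proof (induction n arbitrary: f g)
  case 0
  then show ?case by (simp add: pd_differentiable_upto_0 differentiable_on_add)
next
  case (Suc n)
  then have diff: "f differentiable_on U" "g differentiable_on U"
    and upto: "pd_differentiable_upto n U (pd i f)" "pd_differentiable_upto n U (pd i g)" for i
    by (simp_all add: pd_differentiable_upto_Suc)
  have "pd i f y + pd i g y = pd i (\<lambda>y. f y + g y) y" if "y \<in> U" for i y
  proof -
    have "f differentiable at y" "g differentiable at y"
      using diff that differentiable_on_eq_differentiable_at[OF assms] by auto
    then show ?thesis by (simp add: pd_add)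
  qed
  moreover have "pd_differentiable_upto n U (\<lambda>y. pd i f y + pd i g y)" for i
    using upto by (rule Suc.IH)
  ultimately have "pd_differentiable_upto n U (pd i (\<lambda>y. f y + g y))" for i
    by (rule pd_differentiable_upto_cong[OF assms])
  then show ?case
    using diff by (simp add: pd_differentiable_upto_Suc differentiable_on_add)
qed

lemma pd_differentiable_upto_mult:
  assumes "open U"
  shows "smooth4_on U f \<Longrightarrow> smooth4_on U g \<Longrightarrow> pd_differentiable_upto n U (\<lambda>y. f y * g y)"
proof (induction n arbitrary: f g)
  case 0
  then show ?case
    by (simp add: smooth4_on_imp_differentiable_on pd_differentiable_upto_0 differentiable_on_mult)
next
  case (Suc n)
  have "pd i f y * g y + f y * pd i g y = pd i (\<lambda>y. f y * g y) y" if "y \<in> U" for i y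
    using Suc.prems that smooth4_on_imp_differentiable[OF assms] by (simp add: pd_mult)
  moreover have "pd_differentiable_upto n U (\<lambda>y. pd i f y * g y + f y * pd i g y)" for i
    using Suc.prems smooth4_on_pd by (intro pd_differentiable_upto_add[OF assms] Suc.IH)
  ultimately have "pd_differentiable_upto n U (pd i (\<lambda>y. f y * g y))" for i
    by (rule pd_differentiable_upto_cong[OF assms])
  moreover have "(\<lambda>y. f y * g y) differentiable_on U"
    using Suc.prems by (simp add: smooth4_on_imp_differentiable_on differentiable_on_mult)
  ultimately show ?case
    by (simp add: pd_differentiable_upto_Suc)
qed

lemma smooth4_on_mult:
  assumes "open U" "smooth4_on U f" "smooth4_on U g"
  shows "smooth4_on U (\<lambda>y. f y * g y)"
  using pd_differentiable_upto_mult[OF assms] unfolding smooth4_on_iff_upto by blast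

lemma smooth4_on_add:
  assumes "open U" "smooth4_on U f" "smooth4_on U g"
  shows "smooth4_on U (\<lambda>y. f y + g y)"
  using pd_differentiable_upto_add[OF assms(1)] assms(2,3) unfolding smooth4_on_iff_upto by blast

lemma smooth4_on_const: "smooth4_on U (\<lambda>y. c)"
proof -
  have "pdl is (\<lambda>y. c) = (\<lambda>y. if is = [] then c else 0)" for "is"
    by (induction "is") auto
  then show ?thesis unfolding smooth4_on_def by simp
qed

lemma smooth4_on_diff:
  assumes "open U" "smooth4_on U f" "smooth4_on U g"
  shows "smooth4_on U (\<lambda>y. f y - g y)"
proof -
  have "smooth4_on U (\<lambda>y. f y + (- 1) * g y)"
    using assms smooth4_on_const by (intro smooth4_on_add smooth4_on_mult)
  then show ?thesis by simp
qed

lemma smooth4_on_sum: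
  assumes "open U" "finite S" "\<And>k. k \<in> S \<Longrightarrow> smooth4_on U (f k)"
  shows "smooth4_on U (\<lambda>y. \<Sum>k\<in>S. f k y)"
  using assms(2,3)
proof (induction S rule: finite_induct)
  case (insert k S)
  then have "smooth4_on U (\<lambda>y. f k y + (\<Sum>k\<in>S. f k y))"
    by (intro smooth4_on_add[OF assms(1)]) auto
  then show ?case using insert by simp
qed (simp add: smooth4_on_const)

lemma matrix_inv_entries:
  fixes A :: "real^'n^'n"
  assumes "det A \<noteq> 0"
  shows "(\<Sum>k\<in>UNIV. A $ i $ k * matrix_inv A $ k $ j) = (if i = j then 1 else 0)"
    and "(\<Sum>k\<in>UNIV. matrix_inv A $ i $ k * A $ k $ j) = (if i = j then 1 else 0)"
proof -
  have "\<exists>A'. A ** A' = mat 1 \<and> A' ** A = mat 1"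
    using assms invertible_det_nz unfolding invertible_def by blast
  then have "A ** matrix_inv A = mat 1 \<and> matrix_inv A ** A = mat 1"
    unfolding matrix_inv_def by (rule someI_ex)
  then have "(A ** matrix_inv A) $ i $ j = mat 1 $ i $ j" "(matrix_inv A ** A) $ i $ j = mat 1 $ i $ j"
    by simp_all
  then show "(\<Sum>k\<in>UNIV. A $ i $ k * matrix_inv A $ k $ j) = (if i = j then 1 else 0)"
    "(\<Sum>k\<in>UNIV. matrix_inv A $ i $ k * A $ k $ j) = (if i = j then 1 else 0)"
    by (simp_all add: matrix_matrix_mult_def mat_def)
qed

lemma sum_delta_mult: "(\<Sum>m\<in>(UNIV::'n::finite set). (if l = m then 1 else 0) * (c m :: real)) = c l"
  by (simp add: if_distrib[of "\<lambda>t. t * _"] cong: if_cong)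

lemma sum_lessThan_4: "(\<Sum>a<(4::nat). h a) = h 0 + h 1 + h 2 + h 3"
  by (simp add: eval_nat_numeral)

lemma less_4_cases: "(b::nat) < 4 \<Longrightarrow> b = 0 \<or> b = 1 \<or> b = 2 \<or> b = 3"
  by auto

lemma all_less_4: "(\<forall>p<(4::nat). P p) \<longleftrightarrow> P 0 \<and> P 1 \<and> P 2 \<and> P 3"
  using less_4_cases by auto

lemma sum_swap_inner: "(\<Sum>a\<in>A. \<Sum>b\<in>B. \<Sum>c\<in>C. f a b c) = (\<Sum>a\<in>A. \<Sum>c\<in>C. \<Sum>b\<in>B. f a b c)"
  by (rule sum.cong[OF refl], rule sum.swap)

lemma sum_rotate3: "(\<Sum>i\<in>A. \<Sum>j\<in>B. \<Sum>k\<in>C. f i j k) = (\<Sum>j\<in>B. \<Sum>k\<in>C. \<Sum>i\<in>A. f i j k)"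
  by (subst sum.swap) (rule sum.cong[OF refl], rule sum.swap)

lemma sum_product_triple:
  "(\<Sum>i\<in>A. f i) * (\<Sum>j\<in>B. g j) * (\<Sum>k\<in>C. h k) = (\<Sum>k\<in>C. \<Sum>j\<in>B. \<Sum>i\<in>A. f i * g j * (h k :: real))"
  by (simp add: sum_distrib_left sum_distrib_right)

lemma sum2_product_sum:
  "(\<Sum>i\<in>A. \<Sum>j\<in>B. f i j) * (\<Sum>k\<in>C. h k) = (\<Sum>k\<in>C. \<Sum>i\<in>A. \<Sum>j\<in>B. f i j * (h k :: real))"
  by (simp add: sum_distrib_left sum_distrib_right)

lemma sum_product_sum2:
  "(\<Sum>k\<in>C. h k) * (\<Sum>i\<in>A. \<Sum>j\<in>B. f i j) = (\<Sum>i\<in>A. \<Sum>j\<in>B. \<Sum>k\<in>C. h k * (f i j :: real))"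
  by (simp add: sum_distrib_left sum_distrib_right)

lemma cyclic_sum_contract:
  fixes P :: "'n::finite \<Rightarrow> 'n \<Rightarrow> 'n \<Rightarrow> real" and X Y Z :: "real^'n"
  shows "(\<Sum>i\<in>UNIV. \<Sum>j\<in>UNIV. \<Sum>k\<in>UNIV. (P i j k + P j k i + P k i j) * X $ i * Y $ j * Z $ k)
   = (\<Sum>i\<in>UNIV. \<Sum>j\<in>UNIV. \<Sum>k\<in>UNIV. P i j k * X $ i * Y $ j * Z $ k)
   + (\<Sum>i\<in>UNIV. \<Sum>j\<in>UNIV. \<Sum>k\<in>UNIV. P i j k * Y $ i * Z $ j * X $ k)
   + (\<Sum>i\<in>UNIV. \<Sum>j\<in>UNIV. \<Sum>k\<in>UNIV. P i j k * Z $ i * X $ j * Y $ k)"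
proof -
  have a: "(\<Sum>i\<in>UNIV. \<Sum>j\<in>UNIV. \<Sum>k\<in>UNIV. P j k i * X $ i * Y $ j * Z $ k)
     = (\<Sum>i\<in>UNIV. \<Sum>j\<in>UNIV. \<Sum>k\<in>UNIV. P i j k * Y $ i * Z $ j * X $ k)"
    by (rule trans[OF sum_rotate3]) (intro sum.cong refl; simp add: ac_simps)
  have b: "(\<Sum>i\<in>UNIV. \<Sum>j\<in>UNIV. \<Sum>k\<in>UNIV. P k i j * X $ i * Y $ j * Z $ k)
     = (\<Sum>i\<in>UNIV. \<Sum>j\<in>UNIV. \<Sum>k\<in>UNIV. P i j k * Z $ i * X $ j * Y $ k)"
    by (rule trans[OF sum_rotate3], rule trans[OF sum_rotate3]) (intro sum.cong refl; simp add: ac_simps)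
  show ?thesis unfolding a[symmetric] b[symmetric]
    by (simp only: sum.distrib distrib_right)
qed

lemma gm_inner: "gm G x v w = v \<bullet> (G x *v w)"
  unfolding gm_def inner_vec_def matrix_vector_mult_def
  by (simp add: sum_distrib_left mult.assoc mult.left_commute)

lemma gm_zero_left [simp]: "gm G x 0 w = 0"
  by (simp add: gm_inner)

lemma gm_diff_left: "gm G x (v - v') w = gm G x v w - gm G x v' w"
  by (simp add: gm_inner inner_diff_left)

lemma gm_scale_left: "gm G x (c *\<^sub>R v) w = c * gm G x v w"
  by (simp add: gm_inner)

lemma gm_sum_left: "gm G x (\<Sum>a\<in>S. f a) w = (\<Sum>a\<in>S. gm G x (f a) w)"
  by (simp add: gm_inner inner_sum_left)

lemma gm_add_right: "gm G x w (v + v') = gm G x w v + gm G x w v'"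
  unfolding gm_def by (simp add: algebra_simps sum.distrib)

lemma gm_scale_right: "gm G x w (c *\<^sub>R v) = c * gm G x w v"
  unfolding gm_def by (simp add: sum_distrib_left mult_ac)

lemma inner_flat: "flat G A x \<bullet> w = gm G x w (A x)"
  unfolding inner_vec_def flat_def gm_def by (simp add: sum_distrib_left sum_distrib_right mult_ac)

lemma form2_scaled_wedge_flat:
  "form2 (\<lambda>x. u x *\<^sub>R wedge (flat G A) (flat G B) x) x X Y
   = u x * (gm G x X (A x) * gm G x Y (B x) - gm G x Y (A x) * gm G x X (B x))"
proof -
  have "form2 (\<lambda>x. u x *\<^sub>R wedge (flat G A) (flat G B) x) x X Y
     = u x * ((\<Sum>i\<in>UNIV. \<Sum>j\<in>UNIV. (flat G A x $ i * X $ i) * (flat G B x $ j * Y $ j))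
            - (\<Sum>i\<in>UNIV. \<Sum>j\<in>UNIV. (flat G B x $ i * X $ i) * (flat G A x $ j * Y $ j)))"
    unfolding form2_def wedge_def by (simp add: sum_distrib_left sum_subtractf[symmetric] algebra_simps)
  also have "\<dots> = u x * ((flat G A x \<bullet> X) * (flat G B x \<bullet> Y) - (flat G A x \<bullet> Y) * (flat G B x \<bullet> X))"
    unfolding inner_vec_def by (simp add: sum_product[symmetric])
  finally show ?thesis by (simp add: inner_flat)
qed

lemma hodge_scale: "hodge G s (\<lambda>x. u x *\<^sub>R W x) y = u y *\<^sub>R hodge G s W y"
  unfolding hodge_def raise2_def by (simp add: vec_eq_iff sum_distrib_left mult_ac)

lemma vacuum_imp_force_free: "vacuum_on G U F \<Longrightarrow> force_free_on G U F"
  unfolding force_free_on_def vacuum_on_def form2_def by simp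

definition frame_sign :: "nat \<Rightarrow> real" where
  "frame_sign a = (if a = 0 then -1 else 1)"

locale orthonormal_frame_at =
  fixes G :: tfield and U :: "(real^4) set" and e :: "nat \<Rightarrow> vfield" and x :: "real^4"
  assumes open_U: "open U" and x_in_U: "x \<in> U" and metric: "metric_on U G"
    and frame: "orthonormal_frame_on G U e"
begin

lemma metric_sym: "y \<in> U \<Longrightarrow> G y $ i $ j = G y $ j $ i"
  using metric unfolding metric_on_def by blast

lemma metric_differentiable: "(\<lambda>y. G y $ i $ j) differentiable at x"
  using metric open_U x_in_U smooth4_on_imp_differentiable
  unfolding metric_on_def smooth_tf_on_def by blast

lemma frame_differentiable: "a < 4 \<Longrightarrow> (\<lambda>y. e a y $ k) differentiable at x"
  using frame open_U x_in_U smooth4_on_imp_differentiable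
  unfolding orthonormal_frame_on_def smooth_vf_on_def by blast

lemma flat_frame_differentiable: "s < 4 \<Longrightarrow> (\<lambda>y. flat G (e s) y $ j) differentiable at x"
  unfolding flat_def using metric_differentiable frame_differentiable by simp

lemma gm_frame_on:
  "y \<in> U \<Longrightarrow> a < 4 \<Longrightarrow> b < 4 \<Longrightarrow> gm G y (e a y) (e b y) = (if a = b then frame_sign a else 0)"
  using frame unfolding orthonormal_frame_on_def frame_sign_def by blast

lemma gm_frame: "a < 4 \<Longrightarrow> b < 4 \<Longrightarrow> gm G x (e a x) (e b x) = (if a = b then frame_sign a else 0)"
  using gm_frame_on x_in_U by blast

lemma pd_metric_sym: "pd k (\<lambda>y. G y $ i $ j) x = pd k (\<lambda>y. G y $ j $ i) x"
  by (rule pd_cong[OF open_U x_in_U]) (rule metric_sym)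

lemma metric_times_inverse: "(\<Sum>k\<in>UNIV. G x $ i $ k * ginv G x $ k $ j) = (if i = j then 1 else 0)"
  using metric x_in_U matrix_inv_entries(1) unfolding metric_on_def ginv_def by blast

lemma inverse_times_metric:
  "y \<in> U \<Longrightarrow> (\<Sum>k\<in>UNIV. ginv G y $ i $ k * G y $ k $ j) = (if i = j then 1 else 0)"
  using metric matrix_inv_entries(2) unfolding metric_on_def ginv_def by blast

lemma gm_sym: "gm G x v w = gm G x w v"
  unfolding gm_def by (subst sum.swap) (simp add: metric_sym[OF x_in_U] mult_ac)

lemma frame_inj: "inj_on (\<lambda>a. e a x) {..<4}"
proof (rule inj_onI)
  fix a b
  assume "a \<in> {..<(4::nat)}" "b \<in> {..<(4::nat)}" "e a x = e b x"
  then show "a = b"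
    using gm_frame[of a b] gm_frame[of a a] by (auto simp: frame_sign_def split: if_splits)
qed

lemma frame_independent: "independent ((\<lambda>a. e a x) ` {..<4})"
proof (rule independent_if_scalars_zero)
  show "finite ((\<lambda>a. e a x) ` {..<4})" by simp
  fix f v
  assume sum: "(\<Sum>w\<in>(\<lambda>a. e a x) ` {..<4}. f w *\<^sub>R w) = 0" and "v \<in> (\<lambda>a. e a x) ` {..<4}"
  then obtain b where b: "b < 4" "v = e b x" by auto
  have "0 = gm G x (\<Sum>a<4. f (e a x) *\<^sub>R e a x) (e b x)"
    using sum sum.reindex[OF frame_inj, of "\<lambda>w. f w *\<^sub>R w"] by simp
  also have "\<dots> = (\<Sum>a<4. f (e a x) * gm G x (e a x) (e b x))"
    by (simp add: gm_sum_left gm_scale_left)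
  also have "\<dots> = f (e b x) * frame_sign b"
    using b(1) less_4_cases[of b] by (auto simp: sum_lessThan_4 gm_frame)
  finally show "f v = 0" using b by (simp add: frame_sign_def split: if_splits)
qed

lemma frame_spans: "v \<in> span ((\<lambda>a. e a x) ` {..<4})"
proof -
  have "dim (UNIV :: (real^4) set) \<le> card ((\<lambda>a. e a x) ` {..<4})"
    using card_image[OF frame_inj] by simp
  then show ?thesis
    using card_ge_dim_independent[OF _ frame_independent] by blast
qed

lemma frame_expansion: "v = (\<Sum>a<4. (frame_sign a * gm G x v (e a x)) *\<^sub>R e a x)"
proof -
  obtain c where c: "v = (\<Sum>w\<in>(\<lambda>a. e a x) ` {..<4}. c w *\<^sub>R w)"
    using frame_spans[of v] unfolding span_finite[OF finite_imageI[OF finite_lessThan]] by blast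
  then have v: "v = (\<Sum>a<4. c (e a x) *\<^sub>R e a x)"
    using sum.reindex[OF frame_inj, of "\<lambda>w. c w *\<^sub>R w"] by simp
  have "gm G x v (e b x) = c (e b x) * frame_sign b" if "b < 4" for b
  proof -
    have "gm G x v (e b x) = (\<Sum>a<4. c (e a x) * gm G x (e a x) (e b x))"
      by (subst v) (simp add: gm_sum_left gm_scale_left)
    also have "\<dots> = c (e b x) * frame_sign b"
      using that less_4_cases[of b] by (auto simp: sum_lessThan_4 gm_frame)
    finally show ?thesis .
  qed
  then have "c (e a x) = frame_sign a * gm G x v (e a x)" if "a < 4" for a
    using that by (simp add: frame_sign_def)
  then have "(\<Sum>a<4. c (e a x) *\<^sub>R e a x) = (\<Sum>a<4. (frame_sign a * gm G x v (e a x)) *\<^sub>R e a x)"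
    by (intro sum.cong) auto
  with v show ?thesis by (rule trans)
qed

lemma frame_expansion_01:
  assumes "gm G x v (e 2 x) = 0" "gm G x v (e 3 x) = 0"
  shows "v = (- gm G x v (e 0 x)) *\<^sub>R e 0 x + gm G x v (e 1 x) *\<^sub>R e 1 x"
  using frame_expansion[of v] assms by (simp add: sum_lessThan_4 frame_sign_def)

lemma frame_expansion_23:
  assumes "gm G x v (e 0 x) = 0" "gm G x v (e 1 x) = 0"
  shows "v = gm G x v (e 2 x) *\<^sub>R e 2 x + gm G x v (e 3 x) *\<^sub>R e 3 x"
  using frame_expansion[of v] assms by (simp add: sum_lessThan_4 frame_sign_def)

lemma gm_span_frame_pair:
  assumes "v \<in> span {e p x, e q x}" "c < 4" "p < 4" "q < 4" "c \<noteq> p" "c \<noteq> q"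
  shows "gm G x v (e c x) = 0"
proof -
  have "orthogonal (G x *v e c x) v"
  proof (rule orthogonal_to_span[OF assms(1)])
    fix y
    assume "y \<in> {e p x, e q x}"
    then have "gm G x y (e c x) = 0" using gm_frame assms by auto
    then show "orthogonal (G x *v e c x) y"
      unfolding orthogonal_def gm_inner by (simp add: inner_commute)
  qed
  then show ?thesis unfolding orthogonal_def gm_inner by (simp add: inner_commute)
qed

lemma frame_dual_zero:
  assumes "\<forall>a<4. (\<Sum>i\<in>UNIV. s i * e a x $ i) = 0"
  shows "s i = 0"
proof -
  define v :: "real^4" where "v = (\<chi> i. s i)"
  have "v \<bullet> e a x = 0" if "a < 4" for a
    using assms that unfolding v_def inner_vec_def by simp
  then have "v \<bullet> v = 0"
    by (subst (2) frame_expansion[of v]) (simp add: inner_sum_right)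
  then show ?thesis unfolding v_def by (metis inner_eq_zero_iff vec_lambda_beta zero_index)
qed

lemma frame_trilinear_zero:
  assumes "\<And>p q r. p < 4 \<Longrightarrow> q < 4 \<Longrightarrow> r < 4 \<Longrightarrow>
     (\<Sum>i\<in>UNIV. \<Sum>j\<in>UNIV. \<Sum>k\<in>UNIV. T i j k * e p x $ i * e q x $ j * e r x $ k) = 0"
  shows "T i j k = 0"
proof -
  have 2: "(\<Sum>i\<in>UNIV. \<Sum>j\<in>UNIV. T i j k * e p x $ i * e q x $ j) = 0" if "p < 4" "q < 4" for p q k
  proof (rule frame_dual_zero[where s = "\<lambda>k. \<Sum>i\<in>UNIV. \<Sum>j\<in>UNIV. T i j k * e p x $ i * e q x $ j"],
      intro allI impI)
    fix r :: nat
    assume "r < 4"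
    have "(\<Sum>k\<in>UNIV. (\<Sum>i\<in>UNIV. \<Sum>j\<in>UNIV. T i j k * e p x $ i * e q x $ j) * e r x $ k)
       = (\<Sum>i\<in>UNIV. \<Sum>j\<in>UNIV. \<Sum>k\<in>UNIV. T i j k * e p x $ i * e q x $ j * e r x $ k)"
      unfolding sum_distrib_right by (rule sum_rotate3)
    also have "\<dots> = 0" using assms that \<open>r < 4\<close> by blast
    finally show "(\<Sum>k\<in>UNIV. (\<Sum>i\<in>UNIV. \<Sum>j\<in>UNIV. T i j k * e p x $ i * e q x $ j) * e r x $ k) = 0" .
  qed
  have 1: "(\<Sum>i\<in>UNIV. T i j k * e p x $ i) = 0" if "p < 4" for p j k
  proof (rule frame_dual_zero[where s = "\<lambda>j. \<Sum>i\<in>UNIV. T i j k * e p x $ i"], intro allI impI)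
    fix q :: nat
    assume "q < 4"
    have "(\<Sum>j\<in>UNIV. (\<Sum>i\<in>UNIV. T i j k * e p x $ i) * e q x $ j)
       = (\<Sum>i\<in>UNIV. \<Sum>j\<in>UNIV. T i j k * e p x $ i * e q x $ j)"
      unfolding sum_distrib_right by (rule sum.swap)
    also have "\<dots> = 0" using 2 that \<open>q < 4\<close> by blast
    finally show "(\<Sum>j\<in>UNIV. (\<Sum>i\<in>UNIV. T i j k * e p x $ i) * e q x $ j) = 0" .
  qed
  show ?thesis
    by (rule frame_dual_zero[where s = "\<lambda>i. T i j k"]) (use 1 in auto)
qed

definition dmetric :: "4 \<Rightarrow> 4 \<Rightarrow> 4 \<Rightarrow> real" where
  "dmetric i j k = pd i (\<lambda>y. G y $ j $ k) x"

definition christoffel_low :: "4 \<Rightarrow> 4 \<Rightarrow> 4 \<Rightarrow> real" where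
  "christoffel_low k i j = (\<Sum>m\<in>UNIV. G x $ k $ m * christoffel G x m i j)"

lemma christoffel_low_eq: "christoffel_low l i j = (dmetric i j l + dmetric j i l - dmetric l i j) / 2"
proof -
  define c where "c m = pd i (\<lambda>y. G y $ j $ m) x + pd j (\<lambda>y. G y $ i $ m) x - pd m (\<lambda>y. G y $ i $ j) x"
    for m
  have "christoffel_low l i j = (\<Sum>k\<in>UNIV. G x $ l $ k * ((\<Sum>m\<in>UNIV. ginv G x $ k $ m * c m) / 2))"
    unfolding christoffel_low_def christoffel_def c_def by simp
  also have "\<dots> = (\<Sum>k\<in>UNIV. \<Sum>m\<in>UNIV. G x $ l $ k * ginv G x $ k $ m * c m) / 2"
    by (simp add: sum_distrib_left sum_divide_distrib mult.assoc)
  also have "\<dots> = (\<Sum>m\<in>UNIV. (\<Sum>k\<in>UNIV. G x $ l $ k * ginv G x $ k $ m) * c m) / 2"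
    by (subst sum.swap) (simp add: sum_distrib_right)
  also have "\<dots> = c l / 2"
    by (simp add: metric_times_inverse sum_delta_mult)
  finally show ?thesis unfolding c_def dmetric_def .
qed

lemma christoffel_sym: "christoffel G x k i j = christoffel G x k j i"
  unfolding christoffel_def using pd_metric_sym by (simp add: algebra_simps)

lemma gm_cov: "gm G x (cov G X Y x) W =
   (\<Sum>i\<in>UNIV. \<Sum>j\<in>UNIV. \<Sum>k\<in>UNIV. X x $ i * G x $ j $ k * pd i (\<lambda>y. Y y $ j) x * W $ k)
 + (\<Sum>i\<in>UNIV. \<Sum>j\<in>UNIV. \<Sum>k\<in>UNIV. X x $ i * Y x $ j * W $ k * christoffel_low k i j)"
proof -
  have "gm G x (cov G X Y x) W = (\<Sum>j\<in>UNIV. \<Sum>k\<in>UNIV. G x $ j $ k *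
      ((\<Sum>i\<in>UNIV. X x $ i * pd i (\<lambda>y. Y y $ j) x)
     + (\<Sum>i\<in>UNIV. \<Sum>l\<in>UNIV. christoffel G x j i l * X x $ i * Y x $ l)) * W $ k)"
    unfolding gm_def cov_def by (simp add: mult.commute mult.left_commute)
  also have "\<dots> = (\<Sum>j\<in>UNIV. \<Sum>k\<in>UNIV. \<Sum>i\<in>UNIV. X x $ i * G x $ j $ k * pd i (\<lambda>y. Y y $ j) x * W $ k)
     + (\<Sum>j\<in>UNIV. \<Sum>k\<in>UNIV. \<Sum>i\<in>UNIV. \<Sum>l\<in>UNIV.
          G x $ j $ k * christoffel G x j i l * X x $ i * Y x $ l * W $ k)"
    by (simp only: distrib_left distrib_right sum.distrib sum_distrib_left sum_distrib_right mult.assoc)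
      (simp add: mult_ac)
  also have "(\<Sum>j\<in>UNIV. \<Sum>k\<in>UNIV. \<Sum>i\<in>UNIV. X x $ i * G x $ j $ k * pd i (\<lambda>y. Y y $ j) x * W $ k)
     = (\<Sum>i\<in>UNIV. \<Sum>j\<in>UNIV. \<Sum>k\<in>UNIV. X x $ i * G x $ j $ k * pd i (\<lambda>y. Y y $ j) x * W $ k)"
    by (subst sum_swap_inner) (rule sum.swap)
  also have "(\<Sum>j\<in>UNIV. \<Sum>k\<in>UNIV. \<Sum>i\<in>UNIV. \<Sum>l\<in>UNIV.
          G x $ j $ k * christoffel G x j i l * X x $ i * Y x $ l * W $ k)
     = (\<Sum>i\<in>UNIV. \<Sum>l\<in>UNIV. \<Sum>k\<in>UNIV. \<Sum>j\<in>UNIV.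
          G x $ j $ k * christoffel G x j i l * X x $ i * Y x $ l * W $ k)"
    by (subst sum.swap, subst sum_rotate3, rule sum.cong[OF refl], subst sum_swap_inner, rule sum.swap)
  also have "\<dots> = (\<Sum>i\<in>UNIV. \<Sum>j\<in>UNIV. \<Sum>k\<in>UNIV. X x $ i * Y x $ j * W $ k * christoffel_low k i j)"
    unfolding christoffel_low_def
    by (simp add: sum_distrib_left sum_distrib_right mult_ac metric_sym[OF x_in_U])
  finally show ?thesis .
qed

lemma pd_gm:
  assumes "\<And>j. (\<lambda>y. Y y $ j) differentiable at x" "\<And>j. (\<lambda>y. Z y $ j) differentiable at x"
  shows "pd i (\<lambda>y. gm G y (Y y) (Z y)) x = (\<Sum>j\<in>UNIV. \<Sum>k\<in>UNIV.
     dmetric i j k * Y x $ j * Z x $ k + G x $ j $ k * pd i (\<lambda>y. Y y $ j) x * Z x $ k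
     + G x $ j $ k * Y x $ j * pd i (\<lambda>y. Z y $ k) x)"
proof -
  have "pd i (\<lambda>y. gm G y (Y y) (Z y)) x
      = (\<Sum>j\<in>UNIV. pd i (\<lambda>y. \<Sum>k\<in>UNIV. G y $ j $ k * Y y $ j * Z y $ k) x)"
    unfolding gm_def using metric_differentiable assms by (intro pd_sum) simp
  also have "\<dots> = (\<Sum>j\<in>UNIV. \<Sum>k\<in>UNIV. pd i (\<lambda>y. G y $ j $ k * Y y $ j * Z y $ k) x)"
    using metric_differentiable assms by (intro sum.cong refl pd_sum) simp
  finally show ?thesis
    unfolding dmetric_def using pd_mult3[OF metric_differentiable assms] by simp
qed

lemma metric_compatible:
  assumes "\<And>j. (\<lambda>y. Y y $ j) differentiable at x" "\<And>j. (\<lambda>y. Z y $ j) differentiable at x"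
  shows "(\<Sum>i\<in>UNIV. X x $ i * pd i (\<lambda>y. gm G y (Y y) (Z y)) x)
     = gm G x (cov G X Y x) (Z x) + gm G x (Y x) (cov G X Z x)"
proof -
  define A where "A = (\<Sum>i\<in>UNIV. \<Sum>j\<in>UNIV. \<Sum>k\<in>UNIV. X x $ i * dmetric i j k * Y x $ j * Z x $ k)"
  define B where "B = (\<Sum>i\<in>UNIV. \<Sum>j\<in>UNIV. \<Sum>k\<in>UNIV.
    X x $ i * G x $ j $ k * pd i (\<lambda>y. Y y $ j) x * Z x $ k)"
  define C where "C = (\<Sum>i\<in>UNIV. \<Sum>j\<in>UNIV. \<Sum>k\<in>UNIV.
    X x $ i * G x $ j $ k * Y x $ j * pd i (\<lambda>y. Z y $ k) x)"
  define \<Gamma>Y where "\<Gamma>Y = (\<Sum>i\<in>UNIV. \<Sum>j\<in>UNIV. \<Sum>k\<in>UNIV.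
    X x $ i * Y x $ j * Z x $ k * christoffel_low k i j)"
  define \<Gamma>Z where "\<Gamma>Z = (\<Sum>i\<in>UNIV. \<Sum>j\<in>UNIV. \<Sum>k\<in>UNIV.
    X x $ i * Y x $ j * Z x $ k * christoffel_low j i k)"
  have "(\<Sum>i\<in>UNIV. X x $ i * pd i (\<lambda>y. gm G y (Y y) (Z y)) x) = A + B + C"
    unfolding pd_gm[OF assms] A_def B_def C_def
    by (simp only: sum.distrib sum_distrib_left distrib_left) (simp add: mult_ac)
  moreover have "gm G x (cov G X Y x) (Z x) = B + \<Gamma>Y"
    unfolding gm_cov B_def \<Gamma>Y_def ..
  moreover have "gm G x (Y x) (cov G X Z x) = C + \<Gamma>Z"
  proof -
    have "gm G x (Y x) (cov G X Z x)
      = (\<Sum>i\<in>UNIV. \<Sum>k\<in>UNIV. \<Sum>j\<in>UNIV. X x $ i * G x $ k $ j * pd i (\<lambda>y. Z y $ k) x * Y x $ j)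
       + (\<Sum>i\<in>UNIV. \<Sum>k\<in>UNIV. \<Sum>j\<in>UNIV. X x $ i * Z x $ k * Y x $ j * christoffel_low j i k)"
      unfolding gm_sym[of "Y x"] gm_cov ..
    also have "\<dots> = C + \<Gamma>Z"
      unfolding C_def \<Gamma>Z_def
      by (subst (1 2) sum_swap_inner) (simp add: mult_ac metric_sym[OF x_in_U])
    finally show ?thesis .
  qed
  moreover have "A = \<Gamma>Y + \<Gamma>Z"
  proof -
    have "dmetric i j k = christoffel_low k i j + christoffel_low j i k" for i j k
      unfolding christoffel_low_eq dmetric_def using pd_metric_sym by (simp add: field_simps)
    then show ?thesis unfolding A_def \<Gamma>Y_def \<Gamma>Z_def
      by (simp only: sum.distrib[symmetric] distrib_left[symmetric]) (simp add: mult_ac)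
  qed
  ultimately show ?thesis by simp
qed

lemma lie_eq_cov_diff: "lie X Y x = cov G X Y x - cov G Y X x"
proof -
  have "(\<Sum>i\<in>UNIV. \<Sum>j\<in>UNIV. christoffel G x k i j * X x $ i * Y x $ j)
     = (\<Sum>i\<in>UNIV. \<Sum>j\<in>UNIV. christoffel G x k i j * Y x $ i * X x $ j)" for k
    by (subst sum.swap) (simp add: christoffel_sym[of k] mult_ac)
  then show ?thesis unfolding lie_def cov_def vec_eq_iff
    by (simp add: sum_subtractf)
qed

definition conn :: "nat \<Rightarrow> nat \<Rightarrow> nat \<Rightarrow> real" where
  "conn a b c = gm G x (cov G (e a) (e b) x) (e c x)"

lemma pd_gm_frame: "a < 4 \<Longrightarrow> b < 4 \<Longrightarrow> pd i (\<lambda>y. gm G y (e a y) (e b y)) x = 0"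
proof -
  assume "a < 4" "b < 4"
  then have "pd i (\<lambda>y. gm G y (e a y) (e b y)) x = pd i (\<lambda>y. if a = b then frame_sign a else 0) x"
    by (intro pd_cong[OF open_U x_in_U]) (simp add: gm_frame_on)
  then show ?thesis by simp
qed

lemma conn_antisym: "b < 4 \<Longrightarrow> c < 4 \<Longrightarrow> conn a b c = - conn a c b"
proof -
  assume bc: "b < 4" "c < 4"
  have "0 = (\<Sum>i\<in>UNIV. e a x $ i * pd i (\<lambda>y. gm G y (e b y) (e c y)) x)"
    using pd_gm_frame[OF bc] by simp
  also have "\<dots> = conn a b c + gm G x (e b x) (cov G (e a) (e c) x)"
    unfolding conn_def by (rule metric_compatible[OF frame_differentiable[OF bc(1)] frame_differentiable[OF bc(2)]])
  finally show ?thesis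
    unfolding conn_def gm_sym[of "e b x"] by linarith
qed

lemma conn_diag: "b < 4 \<Longrightarrow> conn a b b = 0"
  using conn_antisym[of b b a] by simp

lemma conn_antisym_less: "b < 4 \<Longrightarrow> c < b \<Longrightarrow> conn a b c = - conn a c b"
  by (rule conn_antisym) simp_all

lemma gm_lie_frame: "gm G x (lie (e a) (e b) x) (e c x) = conn a b c - conn b a c"
  unfolding lie_eq_cov_diff conn_def by (rule gm_diff_left)

definition divergence :: "vfield \<Rightarrow> real" where
  "divergence A = (\<Sum>m\<in>UNIV. pd m (\<lambda>y. A y $ m) x)
    + (\<Sum>m\<in>UNIV. \<Sum>l\<in>UNIV. christoffel G x m m l * A x $ l)"

lemma frame_completeness:
  "(\<Sum>a<4. frame_sign a * e a x $ i * (\<Sum>l\<in>UNIV. G x $ k $ l * e a x $ l)) = (if i = k then 1 else 0)"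
proof -
  have gm_axis: "gm G x (axis k 1) w = (\<Sum>l\<in>UNIV. G x $ k $ l * w $ l)" for w
    unfolding gm_inner by (simp add: inner_axis' matrix_vector_mult_def)
  have "axis k (1::real) $ i = (\<Sum>a<4. (frame_sign a * gm G x (axis k 1) (e a x)) *\<^sub>R e a x) $ i"
    using frame_expansion[of "axis k 1"] by simp
  then show ?thesis unfolding gm_axis by (simp add: axis_def mult_ac)
qed

lemma divergence_frame: "divergence A = (\<Sum>a<4. frame_sign a * gm G x (cov G (e a) A x) (e a x))"
proof -
  define T where "T k i = pd i (\<lambda>y. A y $ k) x + (\<Sum>j\<in>UNIV. christoffel G x k i j * A x $ j)" for k i
  have cov: "cov G X A x $ k = (\<Sum>i\<in>UNIV. X x $ i * T k i)" for X k
    unfolding cov_def T_def by (simp add: distrib_left sum.distrib sum_distrib_left mult_ac)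
  have "gm G x (cov G (e a) A x) (e a x)
      = (\<Sum>k\<in>UNIV. \<Sum>i\<in>UNIV. T k i * (e a x $ i * (\<Sum>l\<in>UNIV. G x $ k $ l * e a x $ l)))" for a
    unfolding gm_def cov
    by (simp add: sum_distrib_left sum_distrib_right mult_ac, subst sum_swap_inner, simp add: mult_ac)
  then have "(\<Sum>a<4. frame_sign a * gm G x (cov G (e a) A x) (e a x))
      = (\<Sum>a<4. \<Sum>k\<in>UNIV. \<Sum>i\<in>UNIV. T k i * (frame_sign a * e a x $ i * (\<Sum>l\<in>UNIV. G x $ k $ l * e a x $ l)))"
    by (simp add: sum_distrib_left mult_ac)
  also have "\<dots> = (\<Sum>k\<in>UNIV. \<Sum>i\<in>UNIV. \<Sum>a<4.
      T k i * (frame_sign a * e a x $ i * (\<Sum>l\<in>UNIV. G x $ k $ l * e a x $ l)))"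
    by (rule sum_rotate3)
  also have "\<dots> = (\<Sum>k\<in>UNIV. T k k)"
    by (simp only: sum_distrib_left[symmetric] frame_completeness) (simp add: if_distrib cong: if_cong)
  finally show ?thesis unfolding T_def divergence_def by (simp add: sum.distrib)
qed

lemma divergence_frame_conn: "divergence (e b) = (\<Sum>a<4. frame_sign a * conn a b a)"
  unfolding divergence_frame conn_def ..

lemma raise_flat: "y \<in> U \<Longrightarrow> (\<Sum>a\<in>UNIV. ginv G y $ m $ a * flat G A y $ a) = A y $ m"
proof -
  assume y: "y \<in> U"
  have "(\<Sum>a\<in>UNIV. ginv G y $ m $ a * flat G A y $ a)
      = (\<Sum>a\<in>UNIV. \<Sum>j\<in>UNIV. ginv G y $ m $ a * G y $ a $ j * A y $ j)"
    unfolding flat_def by (simp add: sum_distrib_left mult.assoc)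
  also have "\<dots> = (\<Sum>j\<in>UNIV. (\<Sum>a\<in>UNIV. ginv G y $ m $ a * G y $ a $ j) * A y $ j)"
    by (subst sum.swap) (simp add: sum_distrib_right)
  also have "\<dots> = A y $ m"
    using inverse_times_metric[OF y] by (simp add: sum_delta_mult)
  finally show ?thesis .
qed

lemma raise2_scaled_wedge_flat:
  "y \<in> U \<Longrightarrow> raise2 G (\<lambda>x. u x *\<^sub>R wedge (flat G A) (flat G B) x) y $ m $ n
   = u y * (A y $ m * B y $ n - A y $ n * B y $ m)"
proof -
  assume y: "y \<in> U"
  let ?a = "flat G A y" and ?b = "flat G B y" and ?g = "ginv G y"
  have "raise2 G (\<lambda>x. u x *\<^sub>R wedge (flat G A) (flat G B) x) y $ m $ n
     = u y * ((\<Sum>a\<in>UNIV. \<Sum>b\<in>UNIV. (?g $ m $ a * ?a $ a) * (?g $ n $ b * ?b $ b))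
      - (\<Sum>a\<in>UNIV. \<Sum>b\<in>UNIV. (?g $ m $ a * ?b $ a) * (?g $ n $ b * ?a $ b)))"
    unfolding raise2_def wedge_def
    by (simp add: sum_distrib_left sum_subtractf[symmetric] algebra_simps)
  also have "\<dots> = u y * ((\<Sum>a\<in>UNIV. ?g $ m $ a * ?a $ a) * (\<Sum>b\<in>UNIV. ?g $ n $ b * ?b $ b)
      - (\<Sum>a\<in>UNIV. ?g $ m $ a * ?b $ a) * (\<Sum>b\<in>UNIV. ?g $ n $ b * ?a $ b))"
    by (simp add: sum_product)
  finally show ?thesis
    using raise_flat[OF y] by (simp add: mult.commute)
qed

definition ddir :: "real^4 \<Rightarrow> (real^4 \<Rightarrow> real) \<Rightarrow> real" where
  "ddir X f = (\<Sum>i\<in>UNIV. X $ i * pd i f x)"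

definition ddir_vec :: "real^4 \<Rightarrow> vfield \<Rightarrow> real^4" where
  "ddir_vec X A = (\<chi> j. ddir X (\<lambda>y. A y $ j))"

lemma lie_eq_ddir_vec: "lie A B x = ddir_vec (A x) B - ddir_vec (B x) A"
  unfolding lie_def ddir_vec_def ddir_def by (simp add: vec_eq_iff sum_subtractf)

lemma inner_ddir_vec:
  "ddir_vec X A \<bullet> Y = (\<Sum>i\<in>UNIV. \<Sum>j\<in>UNIV. X $ i * pd i (\<lambda>y. A y $ j) x * Y $ j)"
  unfolding ddir_vec_def ddir_def inner_vec_def
  by (subst sum.swap) (simp add: sum_distrib_right)

lemma christoffel_contract_sym:
  "(\<Sum>m\<in>UNIV. \<Sum>l\<in>UNIV. christoffel G x n m l * (P $ m * Q $ l))
   = (\<Sum>m\<in>UNIV. \<Sum>l\<in>UNIV. christoffel G x n m l * (Q $ m * P $ l))"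
  by (subst sum.swap) (simp add: christoffel_sym[of n] mult_ac)

lemma current_scaled_wedge_flat:
  assumes du: "u differentiable at x" and dA: "\<And>j. (\<lambda>y. A y $ j) differentiable at x"
    and dB: "\<And>j. (\<lambda>y. B y $ j) differentiable at x"
  shows "current G (\<lambda>y. u y *\<^sub>R wedge (flat G A) (flat G B) y) x
    = - ((ddir (A x) u + u x * divergence A) *\<^sub>R B x - (ddir (B x) u + u x * divergence B) *\<^sub>R A x
         + u x *\<^sub>R lie A B x)"
proof -
  let ?F = "\<lambda>y. u y *\<^sub>R wedge (flat G A) (flat G B) y"
  note raise = raise2_scaled_wedge_flat[where u = u and A = A and B = B]
  have "(\<Sum>m\<in>UNIV. pd m (\<lambda>y. raise2 G ?F y $ m $ n) x)
     = ddir (A x) u * B x $ n - ddir (B x) u * A x $ n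
       + u x * (\<Sum>m\<in>UNIV. pd m (\<lambda>y. A y $ m) x) * B x $ n
       - u x * (\<Sum>m\<in>UNIV. pd m (\<lambda>y. B y $ m) x) * A x $ n + u x * lie A B x $ n" for n
  proof -
    have "pd m (\<lambda>y. raise2 G ?F y $ m $ n) x = pd m (\<lambda>y. u y * (A y $ m * B y $ n - A y $ n * B y $ m)) x"
      for m by (rule pd_cong[OF open_U x_in_U]) (rule raise)
    then show ?thesis
      unfolding pd_scaled_wedge[OF du dA dB] ddir_def lie_def
      by (simp only: sum.distrib sum_subtractf) (simp add: sum_distrib_left sum_distrib_right algebra_simps)
  qed
  moreover have "(\<Sum>m\<in>UNIV. \<Sum>l\<in>UNIV. christoffel G x m m l * raise2 G ?F x $ l $ n)
     = u x * (\<Sum>m\<in>UNIV. \<Sum>l\<in>UNIV. christoffel G x m m l * A x $ l) * B x $ n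
       - u x * (\<Sum>m\<in>UNIV. \<Sum>l\<in>UNIV. christoffel G x m m l * B x $ l) * A x $ n" for n
    by (simp only: raise[OF x_in_U]) (simp add: sum_subtractf sum_distrib_left sum_distrib_right algebra_simps)
  moreover have "(\<Sum>m\<in>UNIV. \<Sum>l\<in>UNIV. christoffel G x n m l * raise2 G ?F x $ m $ l) = 0" for n
  proof -
    have "(\<Sum>m\<in>UNIV. \<Sum>l\<in>UNIV. christoffel G x n m l * raise2 G ?F x $ m $ l)
      = u x * ((\<Sum>m\<in>UNIV. \<Sum>l\<in>UNIV. christoffel G x n m l * (A x $ m * B x $ l))
         - (\<Sum>m\<in>UNIV. \<Sum>l\<in>UNIV. christoffel G x n m l * (B x $ m * A x $ l)))"
      by (simp only: raise[OF x_in_U]) (simp add: sum_subtractf sum_distrib_left algebra_simps)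
    then show ?thesis using christoffel_contract_sym[of n "A x" "B x"] by simp
  qed
  ultimately show ?thesis
    unfolding current_def divergence_def by (simp add: vec_eq_iff algebra_simps)
qed

lemma scaled_wedge_derivative_contract:
  assumes du: "u differentiable at x" and da: "\<And>j. (\<lambda>y. a y $ j) differentiable at x"
    and db: "\<And>j. (\<lambda>y. b y $ j) differentiable at x"
  shows "(\<Sum>i\<in>UNIV. \<Sum>j\<in>UNIV. \<Sum>k\<in>UNIV.
      pd i (\<lambda>y. u y * (a y $ j * b y $ k - a y $ k * b y $ j)) x * X $ i * Y $ j * Z $ k)
    = ddir X u * ((a x \<bullet> Y) * (b x \<bullet> Z) - (a x \<bullet> Z) * (b x \<bullet> Y))
      + u x * ((ddir_vec X a \<bullet> Y) * (b x \<bullet> Z) + (a x \<bullet> Y) * (ddir_vec X b \<bullet> Z)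
             - (ddir_vec X a \<bullet> Z) * (b x \<bullet> Y) - (a x \<bullet> Z) * (ddir_vec X b \<bullet> Y))"
proof -
  have t1: "(\<Sum>i\<in>UNIV. \<Sum>j\<in>UNIV. \<Sum>k\<in>UNIV. pd i u x * a x $ j * b x $ k * X $ i * Y $ j * Z $ k)
     = ddir X u * (a x \<bullet> Y) * (b x \<bullet> Z)"
    unfolding ddir_def inner_vec_def sum_product_triple
    by (rule trans[OF sum_rotate3], rule trans[OF sum.swap]) (simp add: mult_ac)
  have t2: "(\<Sum>i\<in>UNIV. \<Sum>j\<in>UNIV. \<Sum>k\<in>UNIV. pd i u x * a x $ k * b x $ j * X $ i * Y $ j * Z $ k)
     = ddir X u * (a x \<bullet> Z) * (b x \<bullet> Y)"
    unfolding ddir_def inner_vec_def sum_product_triple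
    by (rule trans[OF sum_rotate3]) (simp add: mult_ac)
  have t3: "(\<Sum>i\<in>UNIV. \<Sum>j\<in>UNIV. \<Sum>k\<in>UNIV. u x * (pd i (\<lambda>y. a y $ j) x * b x $ k) * X $ i * Y $ j * Z $ k)
     = u x * ((ddir_vec X a \<bullet> Y) * (b x \<bullet> Z))"
    unfolding inner_ddir_vec unfolding inner_vec_def sum2_product_sum
    by (rule trans[OF sum_rotate3], rule trans[OF sum_rotate3]) (simp add: sum_distrib_left mult_ac)
  have t4: "(\<Sum>i\<in>UNIV. \<Sum>j\<in>UNIV. \<Sum>k\<in>UNIV. u x * (a x $ j * pd i (\<lambda>y. b y $ k) x) * X $ i * Y $ j * Z $ k)
     = u x * ((a x \<bullet> Y) * (ddir_vec X b \<bullet> Z))"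
    unfolding inner_ddir_vec unfolding inner_vec_def sum_product_sum2
    by (rule trans[OF sum_swap_inner]) (simp add: sum_distrib_left mult_ac)
  have t5: "(\<Sum>i\<in>UNIV. \<Sum>j\<in>UNIV. \<Sum>k\<in>UNIV. u x * (pd i (\<lambda>y. a y $ k) x * b x $ j) * X $ i * Y $ j * Z $ k)
     = u x * ((ddir_vec X a \<bullet> Z) * (b x \<bullet> Y))"
    unfolding inner_ddir_vec unfolding inner_vec_def sum2_product_sum
    by (rule trans[OF sum.swap]) (simp add: sum_distrib_left mult_ac)
  have t6: "(\<Sum>i\<in>UNIV. \<Sum>j\<in>UNIV. \<Sum>k\<in>UNIV. u x * (a x $ k * pd i (\<lambda>y. b y $ j) x) * X $ i * Y $ j * Z $ k)
     = u x * ((a x \<bullet> Z) * (ddir_vec X b \<bullet> Y))"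
    unfolding inner_ddir_vec unfolding inner_vec_def sum_product_sum2
    by (simp add: sum_distrib_left mult_ac)
  show ?thesis
    unfolding pd_scaled_wedge[OF du da db]
    by (simp only: sum.distrib sum_subtractf distrib_right left_diff_distrib t1 t2 t3 t4 t5 t6)
      (simp add: algebra_simps)
qed

lemma inner_ddir_vec_flat_frame:
  assumes "s < 4" "p < 4" "q < 4"
  shows "ddir_vec (e p x) (flat G (e s)) \<bullet> e q x = - gm G x (ddir_vec (e p x) (e q)) (e s x)"
proof -
  have const: "pd i (\<lambda>y. \<Sum>j\<in>UNIV. flat G (e s) y $ j * e q y $ j) x = 0" for i
  proof -
    have "pd i (\<lambda>y. \<Sum>j\<in>UNIV. flat G (e s) y $ j * e q y $ j) x = pd i (\<lambda>y. gm G y (e q y) (e s y)) x"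
      by (rule pd_cong[OF open_U x_in_U]) (simp add: flat_def gm_def sum_distrib_left mult_ac)
    then show ?thesis using pd_gm_frame assms by simp
  qed
  have product_rule: "pd i (\<lambda>y. \<Sum>j\<in>UNIV. flat G (e s) y $ j * e q y $ j) x
     = (\<Sum>j\<in>UNIV. pd i (\<lambda>y. flat G (e s) y $ j) x * e q x $ j
                 + flat G (e s) x $ j * pd i (\<lambda>y. e q y $ j) x)" for i
    using flat_frame_differentiable frame_differentiable assms
    by (simp add: pd_sum pd_mult)
  have "0 = (\<Sum>i\<in>UNIV. e p x $ i * pd i (\<lambda>y. \<Sum>j\<in>UNIV. flat G (e s) y $ j * e q y $ j) x)"
    using const by simp
  also have "\<dots> = (\<Sum>i\<in>UNIV. \<Sum>j\<in>UNIV. e p x $ i * pd i (\<lambda>y. flat G (e s) y $ j) x * e q x $ j)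
      + (\<Sum>i\<in>UNIV. \<Sum>j\<in>UNIV. flat G (e s) x $ j * (e p x $ i * pd i (\<lambda>y. e q y $ j) x))"
    unfolding product_rule
    by (simp only: sum_distrib_left sum.distrib distrib_left) (simp add: mult_ac)
  also have "\<dots> = ddir_vec (e p x) (flat G (e s)) \<bullet> e q x + flat G (e s) x \<bullet> ddir_vec (e p x) (e q)"
    unfolding inner_ddir_vec
    unfolding inner_vec_def ddir_vec_def ddir_def by (subst (2) sum.swap) (simp add: sum_distrib_left)
  finally show ?thesis
    unfolding inner_flat by simp
qed

lemma inv_sq_scaled_wedge_frame:
  assumes "p < 4" "q < 4"
  shows "inv_sq G (\<lambda>x. u x *\<^sub>R wedge (flat G (e p)) (flat G (e q)) x) x
   = 2 * (u x)\<^sup>2 * (gm G x (e p x) (e p x) * gm G x (e q x) (e q x)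
                   - gm G x (e q x) (e p x) * gm G x (e p x) (e q x))"
proof -
  let ?a = "flat G (e p) x" and ?b = "flat G (e q) x" and ?A = "e p x" and ?B = "e q x"
  have "inv_sq G (\<lambda>x. u x *\<^sub>R wedge (flat G (e p)) (flat G (e q)) x) x
     = (\<Sum>m\<in>UNIV. \<Sum>n\<in>UNIV. u x * (?a $ m * ?b $ n - ?a $ n * ?b $ m)
                                * (u x * (?A $ m * ?B $ n - ?A $ n * ?B $ m)))"
    unfolding inv_sq_def raise2_scaled_wedge_flat[OF x_in_U] by (simp add: wedge_def)
  also have "\<dots> = (u x)\<^sup>2 * ((\<Sum>m\<in>UNIV. \<Sum>n\<in>UNIV. (?a $ m * ?A $ m) * (?b $ n * ?B $ n))
      - (\<Sum>m\<in>UNIV. \<Sum>n\<in>UNIV. (?a $ m * ?B $ m) * (?b $ n * ?A $ n))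
      - (\<Sum>m\<in>UNIV. \<Sum>n\<in>UNIV. (?b $ m * ?A $ m) * (?a $ n * ?B $ n))
      + (\<Sum>m\<in>UNIV. \<Sum>n\<in>UNIV. (?b $ m * ?B $ m) * (?a $ n * ?A $ n)))"
    by (simp add: sum_distrib_left sum_subtractf[symmetric] sum.distrib[symmetric]
        power2_eq_square algebra_simps)
  also have "\<dots> = (u x)\<^sup>2 * ((?a \<bullet> ?A) * (?b \<bullet> ?B) - (?a \<bullet> ?B) * (?b \<bullet> ?A)
      - (?b \<bullet> ?A) * (?a \<bullet> ?B) + (?b \<bullet> ?B) * (?a \<bullet> ?A))"
    unfolding inner_vec_def by (simp add: sum_product[symmetric])
  finally show ?thesis
    unfolding inner_flat by (simp add: algebra_simps)
qed

lemma electrically_dominated_nonzero: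
  assumes "electrically_dominated_on G U (\<lambda>x. u x *\<^sub>R wedge (flat G (e 0)) (flat G (e 1)) x)"
  shows "u x \<noteq> 0"
  using assms x_in_U inv_sq_scaled_wedge_frame[where p = 0 and q = 1 and u = u]
  unfolding electrically_dominated_on_def by (auto simp: gm_frame frame_sign_def)

lemma kernel_scaled_wedge_23:
  assumes "u x \<noteq> 0"
  shows "{X. \<forall>Y. form2 (\<lambda>x. u x *\<^sub>R wedge (flat G (e 2)) (flat G (e 3)) x) x X Y = 0}
    = span {e 0 x, e 1 x}"
proof
  show "{X. \<forall>Y. form2 (\<lambda>x. u x *\<^sub>R wedge (flat G (e 2)) (flat G (e 3)) x) x X Y = 0}
      \<subseteq> span {e 0 x, e 1 x}"
  proof
    fix X
    assume "X \<in> {X. \<forall>Y. form2 (\<lambda>x. u x *\<^sub>R wedge (flat G (e 2)) (flat G (e 3)) x) x X Y = 0}"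
    then have "u x * (gm G x X (e 2 x) * gm G x Y (e 3 x) - gm G x Y (e 2 x) * gm G x X (e 3 x)) = 0"
      for Y unfolding form2_scaled_wedge_flat by blast
    from this[of "e 3 x"] this[of "e 2 x"] have "gm G x X (e 2 x) = 0" "gm G x X (e 3 x) = 0"
      using assms by (simp_all add: gm_frame frame_sign_def)
    then have "X = (- gm G x X (e 0 x)) *\<^sub>R e 0 x + gm G x X (e 1 x) *\<^sub>R e 1 x"
      by (rule frame_expansion_01)
    also have "\<dots> \<in> span {e 0 x, e 1 x}"
      by (intro span_add span_mul span_base) auto
    finally show "X \<in> span {e 0 x, e 1 x}" .
  qed
  show "span {e 0 x, e 1 x}
      \<subseteq> {X. \<forall>Y. form2 (\<lambda>x. u x *\<^sub>R wedge (flat G (e 2)) (flat G (e 3)) x) x X Y = 0}"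
    using gm_span_frame_pair by (auto simp: form2_scaled_wedge_flat)
qed

lemma gm_Hvec_frame:
  "gm G x (e d x) (Hvec G e x) = (1/2) * ((- conn 0 0 2 + conn 1 1 2) * gm G x (e d x) (e 2 x)
   + (- conn 0 0 3 + conn 1 1 3) * gm G x (e d x) (e 3 x))"
  unfolding Hvec_def conn_def by (simp add: gm_scale_right gm_add_right)

lemma gm_Htvec_frame:
  "gm G x (e d x) (Htvec G e x) = (1/2) * ((- conn 2 2 0 - conn 3 3 0) * gm G x (e d x) (e 0 x)
   + (conn 2 2 1 + conn 3 3 1) * gm G x (e d x) (e 1 x))"
  unfolding Htvec_def conn_def by (simp add: gm_scale_right gm_add_right)

end

locale frame_amplitude_at = orthonormal_frame_at +
  fixes u :: "real^4 \<Rightarrow> real"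
  assumes smooth_u: "smooth4_on U u" and u_nonzero: "u x \<noteq> 0"
    and pd_ln_u: "\<forall>i. pd i (\<lambda>y. ln \<bar>u y\<bar>) x = 2 * flat G (\<lambda>y. Hvec G e y + Htvec G e y) x $ i"
begin

lemma u_differentiable: "u differentiable at x"
  using smooth4_on_imp_differentiable[OF open_U smooth_u x_in_U] .

lemma ddir_u: "ddir (e c x) u = 2 * u x * (gm G x (e c x) (Hvec G e x) + gm G x (e c x) (Htvec G e x))"
proof -
  have "pd i u x = 2 * u x * flat G (\<lambda>y. Hvec G e y + Htvec G e y) x $ i" for i
    using pd_ln_abs[OF u_differentiable u_nonzero, of i] pd_ln_u u_nonzero by (simp add: field_simps)
  then have "ddir (e c x) u = 2 * u x * gm G x (e c x) (Hvec G e x + Htvec G e x)"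
    unfolding ddir_def flat_def gm_def by (simp add: sum_distrib_left mult_ac)
  then show ?thesis by (simp add: gm_add_right)
qed

lemmas frame_simps = ddir_u gm_Hvec_frame gm_Htvec_frame gm_frame divergence_frame_conn
  sum_lessThan_4 frame_sign_def gm_lie_frame conn_diag conn_antisym_less

lemma current_E_zero:
  assumes "lie (e 0) (e 1) x \<in> span {e 0 x, e 1 x}"
  shows "current G (\<lambda>x. u x *\<^sub>R wedge (flat G (e 0)) (flat G (e 1)) x) x = 0"
proof -
  define L0 where "L0 = gm G x (lie (e 0) (e 1) x) (e 0 x)"
  define L1 where "L1 = gm G x (lie (e 0) (e 1) x) (e 1 x)"
  have lie: "lie (e 0) (e 1) x = (- L0) *\<^sub>R e 0 x + L1 *\<^sub>R e 1 x"
    unfolding L0_def L1_def using assms gm_span_frame_pair by (intro frame_expansion_01) auto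
  \<comment> \<open>Here the choice of \<open>u\<close> pays off: via \<open>ddir_u\<close>, the derivatives of \<open>u\<close> cancel the
    divergence and bracket terms.\<close>
  have "ddir (e 0 x) u + u x * divergence (e 0) = - u x * L1"
    "ddir (e 1 x) u + u x * divergence (e 1) = - u x * L0"
    unfolding L0_def L1_def by (simp_all add: frame_simps algebra_simps)
  then have "(ddir (e 0 x) u + u x * divergence (e 0)) *\<^sub>R e 1 x
      - (ddir (e 1 x) u + u x * divergence (e 1)) *\<^sub>R e 0 x + u x *\<^sub>R lie (e 0) (e 1) x = 0"
    unfolding lie by (simp add: algebra_simps)
  moreover have "current G (\<lambda>x. u x *\<^sub>R wedge (flat G (e 0)) (flat G (e 1)) x) x
    = - ((ddir (e 0 x) u + u x * divergence (e 0)) *\<^sub>R e 1 x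
         - (ddir (e 1 x) u + u x * divergence (e 1)) *\<^sub>R e 0 x + u x *\<^sub>R lie (e 0) (e 1) x)"
    by (rule current_scaled_wedge_flat[OF u_differentiable]) (simp_all add: frame_differentiable)
  ultimately show ?thesis by simp
qed

lemma current_M_zero:
  assumes "lie (e 2) (e 3) x \<in> span {e 2 x, e 3 x}"
  shows "current G (\<lambda>x. u x *\<^sub>R wedge (flat G (e 2)) (flat G (e 3)) x) x = 0"
proof -
  define L2 where "L2 = gm G x (lie (e 2) (e 3) x) (e 2 x)"
  define L3 where "L3 = gm G x (lie (e 2) (e 3) x) (e 3 x)"
  have lie: "lie (e 2) (e 3) x = L2 *\<^sub>R e 2 x + L3 *\<^sub>R e 3 x"
    unfolding L2_def L3_def using assms gm_span_frame_pair by (intro frame_expansion_23) auto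
  have "ddir (e 2 x) u + u x * divergence (e 2) = - u x * L3"
    "ddir (e 3 x) u + u x * divergence (e 3) = u x * L2"
    unfolding L2_def L3_def by (simp_all add: frame_simps algebra_simps)
  then have "(ddir (e 2 x) u + u x * divergence (e 2)) *\<^sub>R e 3 x
      - (ddir (e 3 x) u + u x * divergence (e 3)) *\<^sub>R e 2 x + u x *\<^sub>R lie (e 2) (e 3) x = 0"
    unfolding lie by (simp add: algebra_simps)
  moreover have "current G (\<lambda>x. u x *\<^sub>R wedge (flat G (e 2)) (flat G (e 3)) x) x
    = - ((ddir (e 2 x) u + u x * divergence (e 2)) *\<^sub>R e 3 x
         - (ddir (e 3 x) u + u x * divergence (e 3)) *\<^sub>R e 2 x + u x *\<^sub>R lie (e 2) (e 3) x)"
    by (rule current_scaled_wedge_flat[OF u_differentiable]) (simp_all add: frame_differentiable)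
  ultimately show ?thesis by simp
qed

lemma gm_ddir_vec_frame_swap:
  "q < p \<Longrightarrow> gm G x (ddir_vec (e p x) (e q)) (e c x)
    = gm G x (ddir_vec (e q x) (e p)) (e c x) - (conn q p c - conn p q c)"
  using gm_lie_frame[of q p c] by (simp add: lie_eq_ddir_vec gm_diff_left)

lemma closed_scaled_wedge_23:
  assumes "lie (e 0) (e 1) x \<in> span {e 0 x, e 1 x}"
  shows "pd i (\<lambda>y. u y * (flat G (e 2) y $ j * flat G (e 3) y $ k - flat G (e 2) y $ k * flat G (e 3) y $ j)) x
     + pd j (\<lambda>y. u y * (flat G (e 2) y $ k * flat G (e 3) y $ i - flat G (e 2) y $ i * flat G (e 3) y $ k)) x
     + pd k (\<lambda>y. u y * (flat G (e 2) y $ i * flat G (e 3) y $ j - flat G (e 2) y $ j * flat G (e 3) y $ i)) x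
     = 0"
proof -
  define P where "P i j k = pd i (\<lambda>y. u y * (flat G (e 2) y $ j * flat G (e 3) y $ k
      - flat G (e 2) y $ k * flat G (e 3) y $ j)) x" for i j k
  define a b where "a = flat G (e 2)" and "b = flat G (e 3)"
  define PF where "PF X Y Z = ddir X u * ((a x \<bullet> Y) * (b x \<bullet> Z) - (a x \<bullet> Z) * (b x \<bullet> Y))
      + u x * ((ddir_vec X a \<bullet> Y) * (b x \<bullet> Z) + (a x \<bullet> Y) * (ddir_vec X b \<bullet> Z)
             - (ddir_vec X a \<bullet> Z) * (b x \<bullet> Y) - (a x \<bullet> Z) * (ddir_vec X b \<bullet> Y))" for X Y Z
  have contract: "(\<Sum>i\<in>UNIV. \<Sum>j\<in>UNIV. \<Sum>k\<in>UNIV. P i j k * X $ i * Y $ j * Z $ k) = PF X Y Z" for X Y Z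
    unfolding P_def PF_def a_def b_def
    by (rule scaled_wedge_derivative_contract[OF u_differentiable]) (simp_all add: flat_frame_differentiable)
  \<comment> \<open>On frame triples everything cancels except the \<open>e_2\<close>, \<open>e_3\<close> components of \<open>[e_0, e_1]\<close>.\<close>
  have "conn 1 0 c = conn 0 1 c" if "c = 2 \<or> c = 3" for c
    using gm_span_frame_pair[OF assms, of c] gm_lie_frame[of 0 1 c] that by auto
  then have "\<forall>p<4. \<forall>q<4. \<forall>r<4.
      PF (e p x) (e q x) (e r x) + PF (e q x) (e r x) (e p x) + PF (e r x) (e p x) (e q x) = 0"
    unfolding all_less_4 PF_def a_def b_def
    by (simp add: inner_flat inner_ddir_vec_flat_frame frame_simps gm_ddir_vec_frame_swap algebra_simps)
  then have "P i j k + P j k i + P k i j = 0"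
    by (intro frame_trilinear_zero[where T = "\<lambda>i j k. P i j k + P j k i + P k i j"])
      (simp add: cyclic_sum_contract contract)
  then show ?thesis unfolding P_def .
qed

end

locale frame_amplitude =
  fixes G :: tfield and U :: "(real^4) set" and e :: "nat \<Rightarrow> vfield" and u :: "real^4 \<Rightarrow> real"
  assumes open_U: "open U" and metric: "metric_on U G" and frame: "orthonormal_frame_on G U e"
    and smooth_u: "smooth4_on U u" and u_nonzero: "\<forall>x\<in>U. u x \<noteq> 0"
    and pd_ln_u: "\<forall>x\<in>U. \<forall>i. pd i (\<lambda>y. ln \<bar>u y\<bar>) x = 2 * flat G (\<lambda>y. Hvec G e y + Htvec G e y) x $ i"
begin

lemma frame_at: "x \<in> U \<Longrightarrow> orthonormal_frame_at G U e x"
  using open_U metric frame by unfold_locales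

lemma amplitude_at: "x \<in> U \<Longrightarrow> frame_amplitude_at G U e x u"
  using frame_at smooth_u u_nonzero pd_ln_u
  by (intro frame_amplitude_at.intro frame_amplitude_at_axioms.intro) auto

lemma vacuum_E:
  "involutive2_on U (e 0) (e 1) \<Longrightarrow> vacuum_on G U (\<lambda>x. u x *\<^sub>R wedge (flat G (e 0)) (flat G (e 1)) x)"
  unfolding involutive2_on_def vacuum_on_def using frame_amplitude_at.current_E_zero[OF amplitude_at] by blast

lemma vacuum_M:
  "involutive2_on U (e 2) (e 3) \<Longrightarrow> vacuum_on G U (\<lambda>x. u x *\<^sub>R wedge (flat G (e 2)) (flat G (e 3)) x)"
  unfolding involutive2_on_def vacuum_on_def using frame_amplitude_at.current_M_zero[OF amplitude_at] by blast

lemma em_field_M: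
  assumes "involutive2_on U (e 0) (e 1)"
  shows "em_field_on U (\<lambda>x. u x *\<^sub>R wedge (flat G (e 2)) (flat G (e 3)) x)"
proof -
  have components: "(\<lambda>y. (u y *\<^sub>R wedge (flat G (e 2)) (flat G (e 3)) y) $ j $ k)
     = (\<lambda>y. u y * (flat G (e 2) y $ j * flat G (e 3) y $ k - flat G (e 2) y $ k * flat G (e 3) y $ j))"
    for j k by (simp add: wedge_def fun_eq_iff)
  have "smooth4_on U (\<lambda>y. \<Sum>j\<in>UNIV. G y $ i $ j * e s y $ j)" if "s < 4" for s i
    using metric frame that open_U
    unfolding metric_on_def smooth_tf_on_def orthonormal_frame_on_def smooth_vf_on_def
    by (intro smooth4_on_sum smooth4_on_mult) auto
  then have "smooth4_on U (\<lambda>y. flat G (e s) y $ i)" if "s < 4" for s i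
    unfolding flat_def using that by simp
  then have "smooth_tf_on U (\<lambda>x. u x *\<^sub>R wedge (flat G (e 2)) (flat G (e 3)) x)"
    unfolding smooth_tf_on_def components
    using open_U smooth_u by (intro allI smooth4_on_mult smooth4_on_diff) auto
  moreover have "closed2_on U (\<lambda>x. u x *\<^sub>R wedge (flat G (e 2)) (flat G (e 3)) x)"
    unfolding closed2_on_def components
    using assms frame_amplitude_at.closed_scaled_wedge_23[OF amplitude_at] unfolding involutive2_on_def by blast
  ultimately show ?thesis
    unfolding em_field_on_def by (simp add: wedge_def algebra_simps)
qed

lemma magnetically_dominated_M:
  "magnetically_dominated_on G U (\<lambda>x. u x *\<^sub>R wedge (flat G (e 2)) (flat G (e 3)) x)"
  unfolding magnetically_dominated_on_def
proof
  fix x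
  assume "x \<in> U"
  then interpret orthonormal_frame_at G U e x
    by (rule frame_at)
  show "inv_sq G (\<lambda>x. u x *\<^sub>R wedge (flat G (e 2)) (flat G (e 3)) x) x > 0"
    using u_nonzero x_in_U inv_sq_scaled_wedge_frame[where p = 2 and q = 3 and u = u]
    by (simp add: gm_frame frame_sign_def)
qed

lemma kernel_M:
  "x \<in> U \<Longrightarrow> {X. \<forall>Y. form2 (\<lambda>x. u x *\<^sub>R wedge (flat G (e 2)) (flat G (e 3)) x) x X Y = 0}
    = span {e 0 x, e 1 x}"
  using orthonormal_frame_at.kernel_scaled_wedge_23[OF frame_at] u_nonzero by blast

end

theorem theorem6:
  fixes G :: tfield and U :: "(real^4) set" and p :: "real^4"
    and e :: "nat \<Rightarrow> vfield" and u :: "real^4 \<Rightarrow> real"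
  assumes "metric_on U G"
    and "open U" and "starlike U" and "p \<in> U"
    and "riem_fol_adapted_frame_on G U e"
    and "\<forall>x\<in>U. d1 (flat G (Hvec G e)) x = - d1 (flat G (Htvec G e)) x"
    and "smooth4_on U u"
    and "em_field_on U (\<lambda>x. u x *\<^sub>R wedge (flat G (e 0)) (flat G (e 1)) x)"
    and "force_free_on G U (\<lambda>x. u x *\<^sub>R wedge (flat G (e 0)) (flat G (e 1)) x)"
    and "electrically_dominated_on G U (\<lambda>x. u x *\<^sub>R wedge (flat G (e 0)) (flat G (e 1)) x)"
    and "\<forall>x\<in>U. \<forall>i. pd i (\<lambda>y. ln \<bar>u y\<bar>) x = 2 * flat G (\<lambda>y. Hvec G e y + Htvec G e y) x $ i"
    and "involutive2_on U (e 0) (e 1)"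
  shows "em_field_on U (\<lambda>x. u x *\<^sub>R wedge (flat G (e 2)) (flat G (e 3)) x)
    \<and> force_free_on G U (\<lambda>x. u x *\<^sub>R wedge (flat G (e 2)) (flat G (e 3)) x)
    \<and> magnetically_dominated_on G U (\<lambda>x. u x *\<^sub>R wedge (flat G (e 2)) (flat G (e 3)) x)
    \<and> (\<forall>x\<in>U. {X. \<forall>Y. form2 (\<lambda>x. u x *\<^sub>R wedge (flat G (e 2)) (flat G (e 3)) x) x X Y = 0}
              = span {e 0 x, e 1 x})
    \<and> vacuum_on G U (\<lambda>x. u x *\<^sub>R wedge (flat G (e 0)) (flat G (e 1)) x)
    \<and> vacuum_on G U (\<lambda>x. u x *\<^sub>R wedge (flat G (e 2)) (flat G (e 3)) x)
    \<and> (\<forall>s\<in>{1, -1}.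
         (\<forall>x\<in>U. hodge G s (wedge (flat G (e 0)) (flat G (e 1))) x
                  = - wedge (flat G (e 2)) (flat G (e 3)) x)
         \<longrightarrow> (\<forall>x\<in>U. hodge G s (\<lambda>x. u x *\<^sub>R wedge (flat G (e 0)) (flat G (e 1)) x) x
                  = - (u x *\<^sub>R wedge (flat G (e 2)) (flat G (e 3)) x)))"
proof -
  \<comment> \<open>Starlikeness and \<open>d H\<^sup>\<flat> = - d H\<^sup>~\<^sup>\<flat>\<close> only serve to produce \<open>u\<close> (Poincare lemma).\<close>
  have frame: "orthonormal_frame_on G U e" and involutive_23: "involutive2_on U (e 2) (e 3)"
    using assms(5) unfolding riem_fol_adapted_frame_on_def by auto
  have "u x \<noteq> 0" if "x \<in> U" for x
    using assms(1,2,10) frame that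
    by (intro orthonormal_frame_at.electrically_dominated_nonzero) (unfold_locales, auto)
  then interpret frame_amplitude G U e u
    using assms(1,2,7,11) frame by unfold_locales auto
  have vacuum: "vacuum_on G U (\<lambda>x. u x *\<^sub>R wedge (flat G (e 2)) (flat G (e 3)) x)"
    using vacuum_M[OF involutive_23] .
  show ?thesis
    using em_field_M[OF assms(12)] vacuum_imp_force_free[OF vacuum] magnetically_dominated_M
      kernel_M vacuum_E[OF assms(12)] vacuum
    by (simp add: hodge_scale)
qed

end
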